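(* For each integer $d\ge2$ let $$\beta_d = \inf_{-\frac{1}{d-1}\le \gamma<1} \frac{1-\frac{F^*(d^2-1,\gamma)}{(d-1)^2}}{1-\gamma}.$$ Then (i) $\beta_d>1-\frac1d$ for every integer $d\ge 2$, and (ii) $\beta_d-\left(1-\frac1d\right)\sim\frac{1}{d^3}$ as $d\to\infty$.
   Context: For an integer $k\ge1$ and $\gamma\in[-1,1]$, $$F^*(k,\gamma)=\frac{2\gamma}{k}\left(\frac{\Gamma((k+1)/2)}{\Gamma(k/2)}\right)^2 {}_2F_1\!\left(\tfrac12,\tfrac12;\tfrac k2+1;\gamma^2\right),$$ where ${}_2F_1$ is the Gaussian hypergeometric function. *)

theory Defs
  imports "HOL-Analysis.Analysis" "HOL-Library.Landau_Symbols"
begin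

definition hyp2F1 :: "real \<Rightarrow> real \<Rightarrow> real \<Rightarrow> real \<Rightarrow> real" where
  "hyp2F1 a b c z =
     (\<Sum>n. pochhammer a n * pochhammer b n / (pochhammer c n * fact n) * z ^ n)"

definition Fstar :: "nat \<Rightarrow> real \<Rightarrow> real" where
  "Fstar k \<gamma> = 2 * \<gamma> / real k * (Gamma ((real k + 1) / 2) / Gamma (real k / 2))\<^sup>2
      * hyp2F1 (1/2) (1/2) (real k / 2 + 1) (\<gamma>\<^sup>2)"

definition beta :: "nat \<Rightarrow> real" where
  "beta d = (INF \<gamma> \<in> {-1 / (real d - 1)..<1}.
      (1 - Fstar (d\<^sup>2 - 1) \<gamma> / (real d - 1)\<^sup>2) / (1 - \<gamma>))"

end

theory Submission
  imports Defs "HOL-Real_Asymp.Real_Asymp"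
begin

(*
  Write F*(k,g) = C_k * g * 2F1(1/2,1/2; k/2+1; g^2), where the constant
  C_k = (2/k) (Gamma((k+1)/2) / Gamma(k/2))^2 lies in [k/(k+1), 1] by log-convexity of Gamma.

  For d >= 3 (so that k/2+1 >= 5) the weights (2n+1) t_n of the odd series
  g * 2F1(g^2) = sum t_n g^(2n+1) add up to at most 2, so this function is 2-Lipschitz on [-1,1].
  The Lipschitz constant of the numerator, 2 C_k/(d-1)^2 <= 1/2, is below the value of the quotient
  at the left endpoint g0 = -1/(d-1), hence the infimum is attained at g0 and
  beta_d = 1 - 1/d + C_k 2F1(g0^2) / (d (d-1)^2).  As C_k -> 1 and 2F1(g0^2) -> 1, the excess is
  asymptotic to 1/d^3.

  For d = 2 we have k = 3, and comparing the coefficients of 2F1(1/2,1/2;5/2;.) with the integral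
  of sqrt(1 - s^2) shows sum t_n <= 3 pi/8 = 1/C_3.  Dropping all but the constant term then
  gives 1 - F*(3,g) >= C_3 (1 - g), so beta_2 >= C_3 = 8/(3 pi) > 1/2.
*)

section \<open>Coefficients of the hypergeometric series\<close>

definition hyp_coeff :: "real \<Rightarrow> nat \<Rightarrow> real" where
  "hyp_coeff c n = pochhammer (1/2) n * pochhammer (1/2) n / (pochhammer c n * fact n)"

lemma hyp2F1_half_half: "hyp2F1 (1/2) (1/2) c z = (\<Sum>n. hyp_coeff c n * z ^ n)"
  by (simp add: hyp2F1_def hyp_coeff_def)

lemma hyp_coeff_0 [simp]: "hyp_coeff c 0 = 1"
  by (simp add: hyp_coeff_def)

lemma hyp_coeff_nonneg: "0 < c \<Longrightarrow> 0 \<le> hyp_coeff c n"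
  unfolding hyp_coeff_def
  by (intro divide_nonneg_pos mult_nonneg_nonneg mult_pos_pos pochhammer_nonneg pochhammer_pos) auto

lemma pochhammer_mono_left:
  fixes a b :: real
  assumes "0 < a" "a \<le> b"
  shows "pochhammer a n \<le> pochhammer b n"
  using assms by (induction n) (auto simp: pochhammer_Suc intro!: mult_mono pochhammer_nonneg)

lemma hyp_coeff_antimono:
  assumes "0 < c" "c \<le> c'"
  shows "hyp_coeff c' n \<le> hyp_coeff c n"
  unfolding hyp_coeff_def using assms
  by (intro divide_left_mono mult_right_mono pochhammer_mono_left mult_nonneg_nonneg
      mult_pos_pos pochhammer_nonneg pochhammer_pos) auto

lemma odd_weight_hyp_coeff_le:
  assumes "5 \<le> c"
  shows "(2 * real n + 1) * hyp_coeff c n \<le> 24 / ((real n + 2) * (real n + 3) * (real n + 4))"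
proof -
  have "(2 * real n + 1) * pochhammer (1/2) n = 2 * pochhammer (1/2) (Suc n)"
    by (simp add: pochhammer_Suc algebra_simps)
  also have "\<dots> = pochhammer (3/2) n"
    by (simp add: pochhammer_rec)
  also have "\<dots> \<le> pochhammer 2 n"
    by (rule pochhammer_mono_left) auto
  also have "\<dots> = fact (Suc n)"
    using pochhammer_rec [of "1::real" n] by (simp add: pochhammer_fact)
  finally have num: "(2 * real n + 1) * pochhammer (1/2) n \<le> fact (Suc n)" .
  have half_le_fact: "pochhammer (1/2) n \<le> (fact n :: real)"
    using pochhammer_mono_left [of "1/2" 1 n] by (simp add: pochhammer_fact)
  have "fact (n + 4) = 24 * (pochhammer 5 n :: real)"
    using pochhammer_product' [of "1::real" 4 n]
    by (simp add: pochhammer_fact add.commute numeral_eq_Suc pochhammer_Suc)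
  also have "\<dots> \<le> 24 * pochhammer c n"
    using assms by (simp add: pochhammer_mono_left)
  finally have den: "fact (n + 4) \<le> 24 * pochhammer c n" .
  have pos: "0 < pochhammer c n" "0 \<le> pochhammer (1/2::real) n"
    using assms by (auto intro: pochhammer_pos pochhammer_nonneg)
  have "(2 * real n + 1) * hyp_coeff c n
      = ((2 * real n + 1) * pochhammer (1/2) n) * (pochhammer (1/2) n / fact n) / pochhammer c n"
    by (simp add: hyp_coeff_def mult_ac)
  also have "\<dots> \<le> fact (Suc n) * 1 / (fact (n + 4) / 24)"
    using num half_le_fact den pos
    by (intro frac_le mult_mono) (auto simp: divide_le_eq_1)
  also have "fact (n + 4) = fact (Suc n) * ((real n + 2) * (real n + 3) * (real n + 4))"
    by (simp add: numeral_eq_Suc algebra_simps)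
  also have "fact (Suc n) * 1 / (fact (Suc n) * ((real n + 2) * (real n + 3) * (real n + 4)) / 24)
      = 24 / ((real n + 2) * (real n + 3) * (real n + 4))"
    by simp
  finally show ?thesis .
qed

lemma cubic_reciprocal_sums:
  "(\<lambda>n. 24 / ((real n + 2) * (real n + 3) * (real n + 4))) sums 2"
proof -
  define f where "f n = 12 / ((real n + 2) * (real n + 3))" for n
  have "f \<longlonglongrightarrow> 0"
    unfolding f_def by real_asymp
  then have "(\<lambda>n. f n - f (Suc n)) sums (f 0 - 0)"
    by (rule telescope_sums')
  moreover have "f n - f (Suc n) = 24 / ((real n + 2) * (real n + 3) * (real n + 4))" for n
  proof -
    have shift: "real (Suc n) + 2 = real n + 3" "real (Suc n) + 3 = real n + 4"
      by simp_all
    have "real n + 2 \<noteq> 0" "real n + 3 \<noteq> 0" "real n + 4 \<noteq> 0"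
      by linarith+
    then show ?thesis
      unfolding f_def shift by (simp add: divide_simps)
  qed
  ultimately show ?thesis
    by (simp add: f_def)
qed

lemma odd_weight_hyp_coeff_summable_le:
  assumes "5 \<le> c"
  shows "summable (\<lambda>n. (2 * real n + 1) * hyp_coeff c n)"
    and "(\<Sum>n. (2 * real n + 1) * hyp_coeff c n) \<le> 2"
proof -
  have nonneg: "0 \<le> (2 * real n + 1) * hyp_coeff c n" for n
    using assms by (simp add: hyp_coeff_nonneg)
  show summ: "summable (\<lambda>n. (2 * real n + 1) * hyp_coeff c n)"
  proof (rule summable_comparison_test' [OF sums_summable [OF cubic_reciprocal_sums]])
    fix n
    show "norm ((2 * real n + 1) * hyp_coeff c n) \<le> 24 / ((real n + 2) * (real n + 3) * (real n + 4))"
      using nonneg [of n] odd_weight_hyp_coeff_le [OF assms, of n] by simp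
  qed
  show "(\<Sum>n. (2 * real n + 1) * hyp_coeff c n) \<le> 2"
    using sums_le [OF odd_weight_hyp_coeff_le [OF assms] summable_sums [OF summ] cubic_reciprocal_sums] .
qed

section \<open>Summability via the parameter 5/2\<close>

definition inv_sqrt_coeff :: "nat \<Rightarrow> real" where
  "inv_sqrt_coeff n = pochhammer (1/2) n / fact n"

lemma inv_sqrt_coeff_nonneg: "0 \<le> inv_sqrt_coeff n"
  unfolding inv_sqrt_coeff_def by (intro divide_nonneg_pos pochhammer_nonneg) auto

lemma inv_sqrt_coeff_sums:
  assumes "\<bar>x\<bar> < 1"
  shows "(\<lambda>n. inv_sqrt_coeff n * x ^ n) sums (1 - x) powr (-1/2)"
proof -
  have "((-1/2) gchoose n) * (-x) ^ n = inv_sqrt_coeff n * x ^ n" for n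
  proof -
    have "((-1/2) gchoose n) * (-x) ^ n = ((-1) ^ n * (-1) ^ n) * (inv_sqrt_coeff n * x ^ n)"
      unfolding gbinomial_pochhammer power_minus [of x] inv_sqrt_coeff_def by simp
    also have "(-1::real) ^ n * (-1) ^ n = 1"
      by (simp flip: power_mult_distrib)
    finally show ?thesis
      by simp
  qed
  with gen_binomial_real [of "-x" "-1/2"] assms show ?thesis
    by simp
qed

lemma pochhammer_half_mult:
  "pochhammer (1/2::real) n * ((2 * real n + 1) * (2 * real n + 3)) = 3 * pochhammer (5/2) n"
proof (induction n)
  case (Suc n)
  have "pochhammer (1/2::real) (Suc n) * ((2 * real (Suc n) + 1) * (2 * real (Suc n) + 3))
      = pochhammer (1/2) n * ((2 * real n + 1) * (2 * real n + 3)) * (real n + 5/2)"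
    by (simp add: pochhammer_Suc algebra_simps)
  also have "\<dots> = 3 * pochhammer (5/2) n * (real n + 5/2)"
    by (simp only: Suc)
  also have "\<dots> = 3 * pochhammer (5/2) (Suc n)"
    by (simp add: pochhammer_Suc algebra_simps)
  finally show ?case .
qed simp

lemma hyp_coeff_five_halves:
  "hyp_coeff (5/2) n = 3/2 * inv_sqrt_coeff n * (1 / (2 * real n + 1) - 1 / (2 * real n + 3))"
proof -
  have pos: "0 < pochhammer (5/2::real) n" "0 < 2 * real n + 1" "0 < 2 * real n + 3"
    by (auto intro: pochhammer_pos)
  have "hyp_coeff (5/2) n = inv_sqrt_coeff n * (pochhammer (1/2) n / pochhammer (5/2) n)"
    by (simp add: hyp_coeff_def inv_sqrt_coeff_def)
  also have "pochhammer (1/2) n / pochhammer (5/2) n = 3 / ((2 * real n + 1) * (2 * real n + 3))"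
    using pochhammer_half_mult [of n] pos by (subst frac_eq_eq) auto
  finally show ?thesis
    using pos by (simp add: field_simps)
qed

lemma even_power_one_minus_square_has_integral:
  "((\<lambda>s. s ^ (2*n) * (1 - s\<^sup>2)) has_integral (1 / (2 * real n + 1) - 1 / (2 * real n + 3))) {0..1}"
proof -
  define F where "F s = s ^ (2*n+1) / real (2*n+1) - s ^ (2*n+3) / real (2*n+3)" for s :: real
  have "(F has_real_derivative s ^ (2*n) * (1 - s\<^sup>2)) (at s)" for s
  proof -
    have "(F has_real_derivative
        real (2*n+1) * s ^ (2*n) / real (2*n+1) - real (2*n+3) * s ^ (2*n+2) / real (2*n+3)) (at s)"
      unfolding F_def using DERIV_pow [of "2*n+1" s] DERIV_pow [of "2*n+3" s]
      by (intro DERIV_diff DERIV_cdivide) (simp_all add: numeral_3_eq_3)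
    then have "(F has_real_derivative s ^ (2*n) - s ^ (2*n+2)) (at s)"
      by simp
    then show ?thesis
      by (simp add: power_add power2_eq_square algebra_simps)
  qed
  then have "((\<lambda>s. s ^ (2*n) * (1 - s\<^sup>2)) has_integral (F 1 - F 0)) {0..1}"
    by (intro fundamental_theorem_of_calculus)
      (auto simp: has_real_derivative_iff_has_vector_derivative [symmetric] intro: has_field_derivative_at_within)
  also have "F 1 - F 0 = 1 / (2 * real n + 1) - 1 / (2 * real n + 3)"
    by (simp add: F_def power_0_left add.commute)
  finally show ?thesis .
qed

lemma sqrt_one_minus_square_has_integral: "((\<lambda>s. sqrt (1 - s\<^sup>2)) has_integral pi / 4) {0..1}"
proof -
  define F where "F s = (s * sqrt (1 - s\<^sup>2) + arcsin s) / 2" for s :: real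
  have "((\<lambda>s. sqrt (1 - s\<^sup>2)) has_integral (F 1 - F 0)) {0..1}"
  proof (rule fundamental_theorem_of_calculus_interior)
    show "continuous_on {0..1} F"
      unfolding F_def by (intro continuous_intros) (auto simp: power_le_one)
  next
    fix s :: real
    assume s: "s \<in> {0<..<1}"
    then have "0 < 1 - s\<^sup>2"
      by (simp add: abs_square_less_1)
    then have r: "0 < sqrt (1 - s\<^sup>2)" "sqrt (1 - s\<^sup>2) ^ 2 = 1 - s\<^sup>2"
      by simp_all
    have "(F has_real_derivative
        (sqrt (1 - s\<^sup>2) - s * s / sqrt (1 - s\<^sup>2) + 1 / sqrt (1 - s\<^sup>2)) / 2) (at s)"
      unfolding F_def using s \<open>0 < 1 - s\<^sup>2\<close>
      by (auto intro!: derivative_eq_intros simp: field_simps)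
    also have "(sqrt (1 - s\<^sup>2) - s * s / sqrt (1 - s\<^sup>2) + 1 / sqrt (1 - s\<^sup>2)) / 2 = sqrt (1 - s\<^sup>2)"
      using r by (simp add: field_simps power2_eq_square)
    finally show "(F has_vector_derivative sqrt (1 - s\<^sup>2)) (at s)"
      by (simp add: has_real_derivative_iff_has_vector_derivative)
  qed simp
  then show ?thesis
    by (simp add: F_def)
qed

(* Termwise, t_n = (3/2) u_n * integral_0^1 s^(2n) (1 - s^2) ds with u_n = inv_sqrt_coeff n, and
   sum u_n s^(2n) = (1 - s^2)^(-1/2), so the partial sums are dominated by (3/2) * integral of
   sqrt(1 - s^2) = 3 pi/8. *)
lemma sum_hyp_coeff_five_halves_le: "(\<Sum>n<N. hyp_coeff (5/2) n) \<le> 3 * pi / 8"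
proof -
  define P where "P s = (\<Sum>n<N. inv_sqrt_coeff n * (s\<^sup>2) ^ n)" for s :: real
  have "(\<lambda>s. 3/2 * ((1 - s\<^sup>2) * P s))
      = (\<lambda>s. \<Sum>n<N. 3/2 * inv_sqrt_coeff n * (s ^ (2*n) * (1 - s\<^sup>2)))"
    by (simp add: P_def sum_distrib_left power_mult [symmetric] mult_ac)
  then have int_P:
    "((\<lambda>s. 3/2 * ((1 - s\<^sup>2) * P s)) has_integral (\<Sum>n<N. hyp_coeff (5/2) n)) {0..1}"
    unfolding hyp_coeff_five_halves
    by (simp only:) (intro has_integral_sum has_integral_mult_right even_power_one_minus_square_has_integral, auto)
  have int_sqrt: "((\<lambda>s. 3/2 * sqrt (1 - s\<^sup>2)) has_integral 3/2 * (pi / 4)) {0..1}"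
    by (intro has_integral_mult_right sqrt_one_minus_square_has_integral)
  have pointwise: "(1 - s\<^sup>2) * P s \<le> sqrt (1 - s\<^sup>2)" if s: "s \<in> {0..<1}" for s
  proof -
    have s2: "0 < 1 - s\<^sup>2" "\<bar>s\<^sup>2\<bar> < 1"
      using s by (auto simp: abs_square_less_1)
    note sums = inv_sqrt_coeff_sums [OF s2(2)]
    have "P s \<le> (\<Sum>n. inv_sqrt_coeff n * (s\<^sup>2) ^ n)"
      unfolding P_def using sums
      by (intro sum_le_suminf) (auto simp: sums_iff intro: mult_nonneg_nonneg inv_sqrt_coeff_nonneg)
    also have "\<dots> = (1 - s\<^sup>2) powr (-1/2)"
      using sums by (simp add: sums_iff)
    finally have "(1 - s\<^sup>2) * P s \<le> (1 - s\<^sup>2) * (1 - s\<^sup>2) powr (-1/2)"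
      using s2 by (intro mult_left_mono) auto
    also have "\<dots> = sqrt (1 - s\<^sup>2)"
      using s2 by (simp add: powr_mult_base powr_half_sqrt)
    finally show ?thesis .
  qed
  have "(\<Sum>n<N. hyp_coeff (5/2) n) \<le> 3/2 * (pi / 4)"
  proof (rule has_integral_le [OF int_P int_sqrt])
    fix s :: real
    assume "s \<in> {0..1}"
    then consider "s \<in> {0..<1}" | "s = 1"
      by fastforce
    then show "3/2 * ((1 - s\<^sup>2) * P s) \<le> 3/2 * sqrt (1 - s\<^sup>2)"
    proof cases
      case 1
      show ?thesis
        by (rule mult_left_mono [OF pointwise [OF 1]]) simp
    qed simp
  qed
  then show ?thesis
    by simp
qed

lemma summable_hyp_coeff:
  assumes "5/2 \<le> c"
  shows "summable (hyp_coeff c)"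
proof -
  have five_halves: "summable (hyp_coeff (5/2))"
    using sum_hyp_coeff_five_halves_le
    by (intro summableI_nonneg_bounded [where x = "3 * pi / 8"] hyp_coeff_nonneg) auto
  show ?thesis
  proof (rule summable_comparison_test' [OF five_halves])
    fix n
    show "norm (hyp_coeff c n) \<le> hyp_coeff (5/2) n"
      using assms hyp_coeff_nonneg [of c n] hyp_coeff_antimono [of "5/2" c n] by simp
  qed
qed

lemma suminf_hyp_coeff_five_halves_le: "suminf (hyp_coeff (5/2)) \<le> 3 * pi / 8"
  using summable_hyp_coeff [of "5/2"] sum_hyp_coeff_five_halves_le by (intro suminf_le_const) auto

section \<open>Bounds for the hypergeometric function\<close>

lemma hyp2F1_half_half_sums:
  assumes "5/2 \<le> c" "\<bar>z\<bar> \<le> 1"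
  shows "(\<lambda>n. hyp_coeff c n * z ^ n) sums hyp2F1 (1/2) (1/2) c z"
proof -
  have "summable (\<lambda>n. hyp_coeff c n * z ^ n)"
  proof (rule summable_comparison_test' [OF summable_hyp_coeff [OF assms(1)]])
    fix n
    have "\<bar>z\<bar> ^ n \<le> 1"
      using assms(2) by (simp add: power_le_one)
    then show "norm (hyp_coeff c n * z ^ n) \<le> hyp_coeff c n"
      using assms(1) hyp_coeff_nonneg [of c n]
      by (simp add: abs_mult power_abs mult_left_le)
  qed
  then show ?thesis
    by (simp add: hyp2F1_half_half summable_sums)
qed

lemma odd_hyp2F1_sums:
  assumes "5/2 \<le> c" "\<bar>\<gamma>\<bar> \<le> 1"
  shows "(\<lambda>n. hyp_coeff c n * \<gamma> ^ (2*n+1)) sums (\<gamma> * hyp2F1 (1/2) (1/2) c (\<gamma>\<^sup>2))"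
proof -
  have "\<bar>\<gamma>\<^sup>2\<bar> \<le> 1"
    using assms by (simp add: abs_square_le_1)
  from sums_mult2 [OF hyp2F1_half_half_sums [OF assms(1) this], of \<gamma>] show ?thesis
    by (simp add: power_mult [symmetric] mult_ac)
qed

lemma odd_hyp2F1_le:
  assumes "5/2 \<le> c" "\<bar>\<gamma>\<bar> \<le> 1"
  shows "\<gamma> * hyp2F1 (1/2) (1/2) c (\<gamma>\<^sup>2) \<le> suminf (hyp_coeff c) - (1 - \<gamma>)"
proof -
  have diff: "(\<lambda>n. hyp_coeff c n - hyp_coeff c n * \<gamma> ^ (2*n+1)) sums
      (suminf (hyp_coeff c) - \<gamma> * hyp2F1 (1/2) (1/2) c (\<gamma>\<^sup>2))"
    using summable_hyp_coeff [OF assms(1)] odd_hyp2F1_sums [OF assms]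
    by (intro sums_diff) (auto simp: summable_sums)
  have "0 \<le> hyp_coeff c n - hyp_coeff c n * \<gamma> ^ (2*n+1)" for n
  proof -
    have "\<gamma> ^ (2*n+1) \<le> \<bar>\<gamma>\<bar> ^ (2*n+1)"
      by (subst power_abs [symmetric]) (rule abs_ge_self)
    also have "\<dots> \<le> 1"
      using assms(2) by (rule power_le_one [OF abs_ge_zero])
    finally have "hyp_coeff c n * \<gamma> ^ (2*n+1) \<le> hyp_coeff c n"
      using assms(1) by (intro mult_left_le hyp_coeff_nonneg) auto
    then show ?thesis
      by simp
  qed
  then have "(\<Sum>n\<in>{0}. hyp_coeff c n - hyp_coeff c n * \<gamma> ^ (2*n+1))
      \<le> (\<Sum>n. hyp_coeff c n - hyp_coeff c n * \<gamma> ^ (2*n+1))"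
    using diff by (intro sum_le_suminf) (auto simp: sums_iff)
  also have "\<dots> = suminf (hyp_coeff c) - \<gamma> * hyp2F1 (1/2) (1/2) c (\<gamma>\<^sup>2)"
    using diff by (simp add: sums_iff)
  finally show ?thesis
    by simp
qed

lemma odd_hyp2F1_lipschitz:
  assumes "5 \<le> c" "-1 \<le> x" "x \<le> y" "y \<le> 1"
  shows "y * hyp2F1 (1/2) (1/2) c (y\<^sup>2) - x * hyp2F1 (1/2) (1/2) c (x\<^sup>2) \<le> 2 * (y - x)"
proof -
  have c: "5/2 \<le> c" and xy: "\<bar>x\<bar> \<le> 1" "\<bar>y\<bar> \<le> 1"
    using assms by auto
  define S where "S = (\<Sum>n. (2 * real n + 1) * hyp_coeff c n)"
  have diff: "(\<lambda>n. hyp_coeff c n * y ^ (2*n+1) - hyp_coeff c n * x ^ (2*n+1)) sums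
      (y * hyp2F1 (1/2) (1/2) c (y\<^sup>2) - x * hyp2F1 (1/2) (1/2) c (x\<^sup>2))"
    by (rule sums_diff [OF odd_hyp2F1_sums [OF c xy(2)] odd_hyp2F1_sums [OF c xy(1)]])
  have bound: "(\<lambda>n. (y - x) * ((2 * real n + 1) * hyp_coeff c n)) sums ((y - x) * S)"
    unfolding S_def using odd_weight_hyp_coeff_summable_le(1) [OF assms(1)]
    by (rule sums_mult [OF summable_sums])
  have "hyp_coeff c n * y ^ (2*n+1) - hyp_coeff c n * x ^ (2*n+1)
      \<le> (y - x) * ((2 * real n + 1) * hyp_coeff c n)" for n
  proof -
    have "y ^ (2*n+1) - x ^ (2*n+1) \<le> real (2*n+1) * (y - x)"
      using norm_power_diff [of y x "2*n+1"] xy assms(3) by simp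
    then have "hyp_coeff c n * (y ^ (2*n+1) - x ^ (2*n+1)) \<le> hyp_coeff c n * (real (2*n+1) * (y - x))"
      using c by (intro mult_left_mono hyp_coeff_nonneg) auto
    then show ?thesis
      by (simp add: algebra_simps)
  qed
  then have "y * hyp2F1 (1/2) (1/2) c (y\<^sup>2) - x * hyp2F1 (1/2) (1/2) c (x\<^sup>2) \<le> (y - x) * S"
    by (rule sums_le [OF _ diff bound])
  also have "\<dots> \<le> (y - x) * 2"
    using odd_weight_hyp_coeff_summable_le(2) [OF assms(1)] assms(3)
    unfolding S_def by (intro mult_left_mono) simp_all
  finally show ?thesis
    by simp
qed

lemma hyp2F1_half_half_ge_1:
  assumes "5/2 \<le> c" "0 \<le> z" "z \<le> 1"
  shows "1 \<le> hyp2F1 (1/2) (1/2) c z"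
proof -
  have sums: "(\<lambda>n. hyp_coeff c n * z ^ n) sums hyp2F1 (1/2) (1/2) c z"
    using assms by (intro hyp2F1_half_half_sums) auto
  have "(\<Sum>n\<in>{0}. hyp_coeff c n * z ^ n) \<le> (\<Sum>n. hyp_coeff c n * z ^ n)"
    using sums assms by (intro sum_le_suminf) (auto simp: sums_iff hyp_coeff_nonneg)
  then show ?thesis
    using sums by (simp add: sums_iff)
qed

lemma hyp2F1_half_half_le:
  assumes "5 \<le> c" "0 \<le> z" "z \<le> 1"
  shows "hyp2F1 (1/2) (1/2) c z \<le> 1 + z"
proof -
  define S where "S = (\<Sum>n. (2 * real n + 1) * hyp_coeff c n)"
  have series: "(\<lambda>n. hyp_coeff c n * z ^ n) sums hyp2F1 (1/2) (1/2) c z"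
    using assms by (intro hyp2F1_half_half_sums) auto
  have bound: "(\<lambda>n. (if n = 0 then 1 - z else 0) + z * ((2 * real n + 1) * hyp_coeff c n))
      sums ((1 - z) + z * S)"
    unfolding S_def
    using sums_single [of 0 "\<lambda>_. 1 - z"] odd_weight_hyp_coeff_summable_le(1) [OF assms(1)]
    by (intro sums_add sums_mult summable_sums) simp_all
  have "hyp_coeff c n * z ^ n \<le> (if n = 0 then 1 - z else 0) + z * ((2 * real n + 1) * hyp_coeff c n)"
    for n
  proof (cases n)
    case (Suc m)
    have t: "0 \<le> hyp_coeff c n"
      using assms by (intro hyp_coeff_nonneg) auto
    have "z ^ n \<le> z"
      using assms by (simp add: Suc mult_left_le power_le_one)
    also have "\<dots> \<le> z * (2 * real n + 1)"
      using mult_left_mono [of 1 "2 * real n + 1" z] assms by simp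
    finally have "hyp_coeff c n * z ^ n \<le> hyp_coeff c n * (z * (2 * real n + 1))"
      using t by (rule mult_left_mono)
    then show ?thesis
      using Suc by (simp add: mult_ac)
  qed simp
  then have "hyp2F1 (1/2) (1/2) c z \<le> (1 - z) + z * S"
    by (rule sums_le [OF _ series bound])
  also have "\<dots> \<le> (1 - z) + z * 2"
    using odd_weight_hyp_coeff_summable_le(2) [OF assms(1)] assms(2)
    unfolding S_def by (intro add_left_mono mult_left_mono) simp_all
  finally show ?thesis
    by simp
qed

section \<open>The constant of F*\<close>

lemma Gamma_half_shift_sq_le:
  fixes y :: real
  assumes "0 < y"
  shows "Gamma (y + 1/2) ^ 2 \<le> Gamma y * Gamma (y + 1)"
proof -
  have pos: "0 < Gamma y" "0 < Gamma (y + 1/2)" "0 < Gamma (y + 1)"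
    using assms by simp_all
  have "(ln \<circ> Gamma) ((1 - 1/2) *\<^sub>R y + (1/2) *\<^sub>R (y + 1))
      \<le> (1 - 1/2) * (ln \<circ> Gamma) y + (1/2) * (ln \<circ> Gamma) (y + 1)"
    using assms by (intro convex_onD [OF log_convex_Gamma_real]) auto
  moreover have "(1 - 1/2) *\<^sub>R y + (1/2) *\<^sub>R (y + 1) = y + 1/2"
    by (simp add: field_simps)
  ultimately have "ln (Gamma (y + 1/2) ^ 2) \<le> ln (Gamma y * Gamma (y + 1))"
    using pos by (simp add: ln_mult ln_realpow)
  then show ?thesis
    using pos by simp
qed

lemma Gamma_plus1_pos: "0 < y \<Longrightarrow> Gamma (y + 1) = y * Gamma (y :: real)"
  by (rule Gamma_plus1) (auto dest: nonpos_Ints_nonpos)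

definition Fstar_const :: "nat \<Rightarrow> real" where
  "Fstar_const k = 2 / real k * (Gamma ((real k + 1) / 2) / Gamma (real k / 2))\<^sup>2"

lemma Fstar_eq: "Fstar k \<gamma> = Fstar_const k * (\<gamma> * hyp2F1 (1/2) (1/2) (real k / 2 + 1) (\<gamma>\<^sup>2))"
  by (simp add: Fstar_def Fstar_const_def mult_ac)

lemma Fstar_const_bounds:
  assumes "0 < k"
  shows "real k / (real k + 1) \<le> Fstar_const k" and "Fstar_const k \<le> 1"
proof -
  define x where "x = real k / 2"
  have x: "0 < x"
    using assms by (simp add: x_def)
  have pos: "0 < Gamma x" "0 < Gamma (x + 1/2)"
    using x by simp_all
  have C: "Fstar_const k = Gamma (x + 1/2) ^ 2 / (x * Gamma x ^ 2)"
    unfolding Fstar_const_def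
    by (simp add: x_def power_divide add_divide_distrib)
  have "Gamma (x + 1) ^ 2 \<le> Gamma (x + 1/2) * Gamma (x + 1/2 + 1)"
    using Gamma_half_shift_sq_le [of "x + 1/2"] x by (simp add: add_ac)
  also have "Gamma (x + 1/2 + 1) = (x + 1/2) * Gamma (x + 1/2)"
    using x by (intro Gamma_plus1_pos) simp
  also have "Gamma (x + 1) = x * Gamma x"
    using x by (rule Gamma_plus1_pos)
  finally have "x\<^sup>2 * Gamma x ^ 2 \<le> (x + 1/2) * Gamma (x + 1/2) ^ 2"
    by (simp add: power2_eq_square mult_ac)
  then have "x / (x + 1/2) \<le> Gamma (x + 1/2) ^ 2 / (x * Gamma x ^ 2)"
    using x pos by (simp add: field_simps power2_eq_square)
  moreover have "real k / (real k + 1) = x / (x + 1/2)"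
    by (simp add: x_def field_simps)
  ultimately show "real k / (real k + 1) \<le> Fstar_const k"
    by (simp add: C)
  have "Gamma (x + 1/2) ^ 2 \<le> x * Gamma x ^ 2"
    using Gamma_half_shift_sq_le [OF x] x by (simp add: Gamma_plus1_pos power2_eq_square mult_ac)
  moreover have "0 < x * Gamma x ^ 2"
    using x pos by (intro mult_pos_pos zero_less_power)
  ultimately show "Fstar_const k \<le> 1"
    by (simp add: C)
qed

lemma Fstar_const_3: "Fstar_const 3 = 8 / (3 * pi)"
proof -
  have "Gamma (3/2 :: real) = Gamma (1/2 + 1)"
    by simp
  also have "\<dots> = sqrt pi / 2"
    by (subst Gamma_plus1_pos) (simp_all add: Gamma_one_half_real)
  finally have Gamma_three_halves: "Gamma (3/2 :: real) ^ 2 = pi / 4"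
    by (simp only:) (simp add: power_divide)
  have Gamma_two: "Gamma (2 :: real) = 1"
    using Gamma_fact [of 1] by simp
  show ?thesis
    by (simp add: Fstar_const_def power_divide Gamma_three_halves Gamma_two)
qed

section \<open>The infimum beta\<close>

lemma INF_ratio_at_left_endpoint:
  fixes \<phi> :: "real \<Rightarrow> real"
  assumes "a < 1"
    and lipschitz: "\<And>\<gamma>. a \<le> \<gamma> \<Longrightarrow> \<gamma> < 1 \<Longrightarrow> \<phi> \<gamma> - \<phi> a \<le> L * (\<gamma> - a)"
    and "L \<le> (1 - \<phi> a) / (1 - a)"
  shows "(INF \<gamma> \<in> {a..<1}. (1 - \<phi> \<gamma>) / (1 - \<gamma>)) = (1 - \<phi> a) / (1 - a)"
proof (rule cInf_eq_minimum)
  show "(1 - \<phi> a) / (1 - a) \<in> (\<lambda>\<gamma>. (1 - \<phi> \<gamma>) / (1 - \<gamma>)) ` {a..<1}"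
    using assms(1) by auto
next
  fix r
  assume "r \<in> (\<lambda>\<gamma>. (1 - \<phi> \<gamma>) / (1 - \<gamma>)) ` {a..<1}"
  then obtain \<gamma> where \<gamma>: "a \<le> \<gamma>" "\<gamma> < 1" and r: "r = (1 - \<phi> \<gamma>) / (1 - \<gamma>)"
    by auto
  define m where "m = (1 - \<phi> a) / (1 - a)"
  have "m * (1 - \<gamma>) = (1 - \<phi> a) - m * (\<gamma> - a)"
    using assms(1) by (simp add: m_def field_simps)
  also have "\<dots> \<le> (1 - \<phi> a) - L * (\<gamma> - a)"
    using mult_right_mono [OF assms(3), of "\<gamma> - a"] \<gamma> by (simp add: m_def)
  also have "\<dots> \<le> 1 - \<phi> \<gamma>"
    using lipschitz [OF \<gamma>] by simp
  finally show "m \<le> r"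
    using \<gamma> by (simp add: r le_divide_eq)
qed

lemma sq_minus_one_bounds:
  fixes d :: nat
  assumes "3 \<le> d"
  shows "real (d\<^sup>2 - 1) = (real d)\<^sup>2 - 1" and "5 \<le> real (d\<^sup>2 - 1) / 2 + 1" and "0 < d\<^sup>2 - 1"
proof -
  have "9 \<le> d\<^sup>2"
    using power_mono [OF assms, of 2] by simp
  moreover have "9 \<le> (real d)\<^sup>2"
    using power_mono [of 3 "real d" 2] assms by simp
  ultimately show "real (d\<^sup>2 - 1) = (real d)\<^sup>2 - 1" "5 \<le> real (d\<^sup>2 - 1) / 2 + 1" "0 < d\<^sup>2 - 1"
    by (simp_all add: of_nat_diff)
qed

definition excess_factor :: "nat \<Rightarrow> real" where
  "excess_factor d = Fstar_const (d\<^sup>2 - 1)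
    * hyp2F1 (1/2) (1/2) (real (d\<^sup>2 - 1) / 2 + 1) ((1 / (real d - 1))\<^sup>2)"

lemma excess_factor_bounds:
  fixes d :: nat
  assumes "3 \<le> d"
  shows "((real d)\<^sup>2 - 1) / (real d)\<^sup>2 \<le> excess_factor d"
    and "excess_factor d \<le> 1 + (1 / (real d - 1))\<^sup>2"
proof -
  note k = sq_minus_one_bounds [OF assms]
  define z where "z = (1 / (real d - 1))\<^sup>2"
  have z: "0 \<le> z" "z \<le> 1"
    using assms by (auto simp: z_def power_le_one)
  have "5/2 \<le> real (d\<^sup>2 - 1) / 2 + 1"
    using k(2) by linarith
  note H = hyp2F1_half_half_ge_1 [OF this z] hyp2F1_half_half_le [OF k(2) z]
  have C: "((real d)\<^sup>2 - 1) / (real d)\<^sup>2 \<le> Fstar_const (d\<^sup>2 - 1)" "Fstar_const (d\<^sup>2 - 1) \<le> 1"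
    using Fstar_const_bounds [OF k(3), unfolded k(1)] by simp_all
  have "1 \<le> (real d)\<^sup>2"
    using assms by (simp add: one_le_power)
  then have "0 \<le> ((real d)\<^sup>2 - 1) / (real d)\<^sup>2"
    by simp
  then have "((real d)\<^sup>2 - 1) / (real d)\<^sup>2 * 1 \<le> excess_factor d"
    unfolding excess_factor_def z_def [symmetric] using C H by (intro mult_mono) auto
  then show "((real d)\<^sup>2 - 1) / (real d)\<^sup>2 \<le> excess_factor d"
    by simp
  have "excess_factor d \<le> 1 * (1 + z)"
    unfolding excess_factor_def z_def [symmetric] using C H by (intro mult_mono) auto
  then show "excess_factor d \<le> 1 + (1 / (real d - 1))\<^sup>2"
    by (simp add: z_def)
qed

lemma beta_eq:
  fixes d :: nat
  assumes "3 \<le> d"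
  shows "beta d = 1 - 1 / real d + excess_factor d / (real d * (real d - 1)\<^sup>2)"
proof -
  define k where "k = d\<^sup>2 - 1"
  define H where "H \<gamma> = hyp2F1 (1/2) (1/2) (real k / 2 + 1) \<gamma>" for \<gamma>
  define C where "C = Fstar_const k"
  define \<phi> where "\<phi> \<gamma> = C * (\<gamma> * H (\<gamma>\<^sup>2)) / (real d - 1)\<^sup>2" for \<gamma>
  define a where "a = -1 / (real d - 1)"
  have d: "2 \<le> real d - 1"
    using assms by simp
  have K: "5 \<le> real k / 2 + 1" and "0 < k"
    using sq_minus_one_bounds [OF assms] by (simp_all add: k_def)
  then have C: "0 \<le> C" "C \<le> 1"
    using Fstar_const_bounds [of k] by (auto simp: C_def intro: order_trans [rotated])
  have a: "-1 \<le> a" "a < 0" "a\<^sup>2 = (1 / (real d - 1))\<^sup>2"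
    using d by (auto simp: a_def field_simps power2_eq_square)
  have H: "1 \<le> H (a\<^sup>2)"
    unfolding H_def using K a(1,2) by (intro hyp2F1_half_half_ge_1) (auto simp: abs_square_le_1)
  have endpoint: "(1 - \<phi> a) / (1 - a) = 1 - 1 / real d + C * H (a\<^sup>2) / (real d * (real d - 1)\<^sup>2)"
  proof -
    have "real d - 1 > 0" "real d > 0"
      using d by auto
    then show ?thesis
      by (simp add: \<phi>_def a_def divide_simps)
  qed
  have "beta d = (INF \<gamma> \<in> {a..<1}. (1 - \<phi> \<gamma>) / (1 - \<gamma>))"
    by (simp add: beta_def Fstar_eq \<phi>_def a_def C_def H_def k_def)
  also have "\<dots> = (1 - \<phi> a) / (1 - a)"
  proof (rule INF_ratio_at_left_endpoint [where L = "2 * C / (real d - 1)\<^sup>2"])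
    fix \<gamma>
    assume "a \<le> \<gamma>" "\<gamma> < 1"
    then have "\<gamma> * H (\<gamma>\<^sup>2) - a * H (a\<^sup>2) \<le> 2 * (\<gamma> - a)"
      unfolding H_def using K a by (intro odd_hyp2F1_lipschitz) auto
    then have "C * (\<gamma> * H (\<gamma>\<^sup>2) - a * H (a\<^sup>2)) / (real d - 1)\<^sup>2 \<le> C * (2 * (\<gamma> - a)) / (real d - 1)\<^sup>2"
      using C by (intro divide_right_mono mult_left_mono) auto
    then show "\<phi> \<gamma> - \<phi> a \<le> 2 * C / (real d - 1)\<^sup>2 * (\<gamma> - a)"
      by (simp add: \<phi>_def algebra_simps diff_divide_distrib)
  next
    have "2 * C / (real d - 1)\<^sup>2 \<le> 2 / 4"
      using C d power_mono [OF d, of 2] by (intro frac_le) auto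
    also have "\<dots> \<le> 1 - 1 / real d"
      using d by (simp add: field_simps)
    also have "\<dots> \<le> (1 - \<phi> a) / (1 - a)"
      unfolding endpoint using C H d by simp
    finally show "2 * C / (real d - 1)\<^sup>2 \<le> (1 - \<phi> a) / (1 - a)" .
  qed (use a in simp)
  finally show ?thesis
    by (simp add: endpoint a(3) C_def H_def k_def excess_factor_def)
qed

lemma beta_2_ge: "8 / (3 * pi) \<le> beta 2"
proof -
  define C where "C = Fstar_const 3"
  have C: "0 < C" "C * suminf (hyp_coeff (5/2)) \<le> 1"
    using suminf_hyp_coeff_five_halves_le by (simp_all add: C_def Fstar_const_3 field_simps)
  have "C \<le> (1 - Fstar 3 \<gamma>) / (1 - \<gamma>)" if "-1 \<le> \<gamma>" "\<gamma> < 1" for \<gamma>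
  proof -
    have "Fstar 3 \<gamma> = C * (\<gamma> * hyp2F1 (1/2) (1/2) (5/2) (\<gamma>\<^sup>2))"
      by (simp add: Fstar_eq C_def)
    also have "\<dots> \<le> C * (suminf (hyp_coeff (5/2)) - (1 - \<gamma>))"
      using C that by (intro mult_left_mono odd_hyp2F1_le) auto
    also have "\<dots> \<le> 1 - C * (1 - \<gamma>)"
      using C by (simp add: algebra_simps)
    finally show ?thesis
      using that by (simp add: le_divide_eq algebra_simps)
  qed
  then have "C \<le> beta 2"
    unfolding beta_def by (intro cINF_greatest) auto
  then show ?thesis
    by (simp add: C_def Fstar_const_3)
qed

lemma beta_gt:
  fixes d :: nat
  assumes "2 \<le> d"
  shows "1 - 1 / real d < beta d"
proof (cases "d = 2")
  case True
  have "1 / 2 < 8 / (3 * pi)"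
    using pi_less_4 by (simp add: field_simps)
  then have "1 / 2 < beta 2"
    using beta_2_ge by linarith
  then show ?thesis
    using True by simp
next
  case False
  then have d: "3 \<le> d"
    using assms by simp
  then have "0 < ((real d)\<^sup>2 - 1) / (real d)\<^sup>2"
    using power_mono [of 3 "real d" 2] by simp
  then have "0 < excess_factor d"
    using excess_factor_bounds(1) [OF d] by linarith
  then show ?thesis
    using d by (simp add: beta_eq)
qed

lemma beta_excess_asymp_equiv:
  "(\<lambda>d. beta d - (1 - 1 / real d)) \<sim>[at_top] (\<lambda>d. 1 / real d ^ 3)"
proof -
  have "excess_factor \<longlonglongrightarrow> 1"
  proof (rule tendsto_sandwich)
    show "\<forall>\<^sub>F d in sequentially. ((real d)\<^sup>2 - 1) / (real d)\<^sup>2 \<le> excess_factor d"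
      "\<forall>\<^sub>F d in sequentially. excess_factor d \<le> 1 + (1 / (real d - 1))\<^sup>2"
      using excess_factor_bounds by (auto simp: eventually_sequentially intro!: exI [of _ 3])
    show "(\<lambda>d. ((real d)\<^sup>2 - 1) / (real d)\<^sup>2) \<longlonglongrightarrow> 1"
      "(\<lambda>d. 1 + (1 / (real d - 1))\<^sup>2) \<longlonglongrightarrow> 1"
      by real_asymp+
  qed
  moreover have "(\<lambda>d. (real d)\<^sup>2 / (real d - 1)\<^sup>2) \<longlonglongrightarrow> 1"
    by real_asymp
  ultimately have "(\<lambda>d. excess_factor d * ((real d)\<^sup>2 / (real d - 1)\<^sup>2)) \<longlonglongrightarrow> 1 * 1"
    by (rule tendsto_mult)
  moreover have "\<forall>\<^sub>F d in sequentially.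
      excess_factor d * ((real d)\<^sup>2 / (real d - 1)\<^sup>2) = (beta d - (1 - 1 / real d)) / (1 / real d ^ 3)"
  proof (rule eventually_mono [OF eventually_ge_at_top [of 3]])
    fix d :: nat
    assume d: "3 \<le> d"
    then have "real d - 1 \<noteq> 0" "real d \<noteq> 0"
      by auto
    then show "excess_factor d * ((real d)\<^sup>2 / (real d - 1)\<^sup>2) = (beta d - (1 - 1 / real d)) / (1 / real d ^ 3)"
      using d by (simp add: beta_eq divide_simps) (simp add: power2_eq_square power3_eq_cube)
  qed
  ultimately show ?thesis
    by (intro asymp_equivI') (simp add: tendsto_cong)
qed

theorem mainTheorem3:
  shows "(\<forall>d::nat. d \<ge> 2 \<longrightarrow> beta d > 1 - 1 / real d)
         \<and> ((\<lambda>d::nat. beta d - (1 - 1 / real d)) \<sim>[at_top] (\<lambda>d. 1 / real d ^ 3))"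
  using beta_gt beta_excess_asymp_equiv by blast

end
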